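(* Let $x_0 \in \mathbb R^{n_x}$ and $u_0 \in \mathbb R^{n_u} \times \{0,1\}^{m_u}$ with $(x_0,u_0) \in \mathcal D$, let $v_0 := V u_0$, let $e_0 \in \mathbb R^{n_x}$, and let $x_1 := A x_0 + B u_0 + e_0$. Let $\mathcal V_0 = [(\underline v_{t|0})_{t=0}^{T-1}, (\bar v_{t|0})_{t=0}^{T-1}]$ be an interval with $\underline v_{0|0} \le v_0 \le \bar v_{0|0}$, and let $\mathcal V_1 := [(\underline v_{1|0}, \ldots, \underline v_{T-1|0}, 0), (\bar v_{1|0}, \ldots, \bar v_{T-1|0}, 1)]$. Let $\{\lambda_{t|0}, \rho_{t|0}\}_{t=0}^{T}$, $\{\mu_{t|0}, \underline\nu_{t|0}, \bar\nu_{t|0}, \sigma_{t|0}\}_{t=0}^{T-1}$ be a certificate of infeasibility for $\mathbf P(\mathcal V_0; x_0)$, with dual objective value $\underline\theta_0(\mathcal V_0)$ (for $\mathbf D(\mathcal V_0; x_0)$). Define the shifted multipliers $(\lambda_{t|1}, \rho_{t|1}) := (\lambda_{t+1|0}, \rho_{t+1|0})$ for $t = 0,\ldots,T-1$, $(\lambda_{T|1}, \rho_{T|1}) := 0$, $(\mu_{t|1}, \underline\nu_{t|1}, \bar\nu_{t|1}, \sigma_{t|1}) := (\mu_{t+1|0}, \underline\nu_{t+1|0}, \bar\nu_{t+1|0}, \sigma_{t+1|0})$ for $t = 0,\ldots,T-2$, and $(\mu_{T-1|1}, \underline\nu_{T-1|1}, \bar\nu_{T-1|1}, \sigma_{T-1|1})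 := 0$. Let $\pi_3 := (h - F x_0 - G u_0)'\mu_{0|0} + (v_0 - \underline v_{0|0})'\underline\nu_{0|0} + (\bar v_{0|0} - v_0)'\bar\nu_{0|0}$. Then the shifted multipliers form a certificate of infeasibility for $\mathbf P(\mathcal V_1; x_1)$ whenever $\lambda_{1|0}' e_0 < \underline\theta_0(\mathcal V_0) + \pi_3$. Moreover, this inequality always holds if $e_0 = 0$.
   Context: Fix integers $n_x, n_u, m_u \ge 0$ and $T \ge 1$. Let $A \in \mathbb R^{n_x \times n_x}$, $B \in \mathbb R^{n_x \times (n_u+m_u)}$, and let $F, G, h$ define the polyhedron $\mathcal D = \{(x,u) \in \mathbb R^{n_x} \times \mathbb R^{n_u+m_u} : F x + G u \le h\}$, assumed to contain the origin. $V \in \mathbb R^{m_u \times (n_u+m_u)}$ is the selection matrix extracting the $m_u$ binary entries of an input vector. Let $Q$ (with $n_x$ columns) and $R$ (with $n_u+m_u$ columns) be weight matrices, possibly rank deficient. An interval is a set $\mathcal V = [(\underline v_t)_{t=0}^{T-1}, (\bar v_t)_{t=0}^{T-1}] \subset \mathbb R^{T m_u}$ with $\underline v_t, \bar v_t \in \{0,1\}^{m_u}$, $\underline v_t \le \bar v_t$; in $\mathcal V_1$ above the appended blocks $0,1$ are the all-zero and all-one vectors of $\mathbb R^{m_u}$. For an interval $\mathcal V$ and $\xi \in \mathbb R^{n_x}$, the QP $\mathbf P(\mathcal V; \xi)$ is: minimize $\sum_{t=0}^T |Q x_t|^2 + \sum_{t=0}^{T-1} |R u_t|^2$ over $x_0,\ldots,x_T$,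 $u_0, \ldots, u_{T-1}$ subject to $x_0 = \xi$, $x_{t+1} = A x_t + B u_t$, $(x_t, u_t) \in \mathcal D$, $\underline v_t \le V u_t \le \bar v_t$ ($t = 0, \ldots, T-1$). Its dual $\mathbf D(\mathcal V; \xi)$ is: maximize $$-\sum_{t=0}^{T} |\rho_t/2|^2 - \sum_{t=0}^{T-1}\big(|\sigma_t/2|^2 + h'\mu_t + \bar v_t'\bar\nu_t - \underline v_t'\underline\nu_t\big) - \xi'\lambda_0$$ over $\{\lambda_t, \rho_t\}_{t=0}^T$, $\{\mu_t, \underline\nu_t, \bar\nu_t, \sigma_t\}_{t=0}^{T-1}$ subject to: $Q'\rho_t + \lambda_t - A'\lambda_{t+1} + F'\mu_t = 0$ ($t=0,\ldots,T-1$); $Q'\rho_T + \lambda_T = 0$; $R'\sigma_t - B'\lambda_{t+1} + G'\mu_t + V'(\bar\nu_t - \underline\nu_t) = 0$ ($t = 0, \ldots, T-1$); $(\mu_t, \underline\nu_t, \bar\nu_t) \ge 0$. A certificate of infeasibility for $\mathbf P(\mathcal V;\xi)$ is a feasible point of $\mathbf D(\mathcal V;\xi)$ whose dual objective value is strictly positive and for which $\rho_t = 0$ and $\sigma_t = 0$ for all $t$. *)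

theory Defs
  imports Complex_Main "Jordan_Normal_Form.Matrix"
begin

(* Vectors/matrices are Jordan_Normal_Form vec/mat (dimension 0 allowed).
   Time-indexed sequences are functions nat => real vec; only indices in the
   relevant range matter. *)

definition vec_le :: "real vec \<Rightarrow> real vec \<Rightarrow> bool" where
  "vec_le a b \<longleftrightarrow> dim_vec a = dim_vec b \<and> (\<forall>i<dim_vec a. a $ i \<le> b $ i)"

definition nonneg_vec :: "real vec \<Rightarrow> bool" where
  "nonneg_vec a \<longleftrightarrow> (\<forall>i<dim_vec a. 0 \<le> a $ i)"

definition binary_vec :: "real vec \<Rightarrow> bool" where
  "binary_vec a \<longleftrightarrow> (\<forall>i<dim_vec a. a $ i = 0 \<or> a $ i = 1)"

definition ones_vec :: "nat \<Rightarrow> real vec" where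
  "ones_vec n = vec n (\<lambda>_. 1)"

(* Selection matrix V in R^{m_u x (n_u+m_u)} extracting the last m_u (binary) entries *)
definition sel_mat :: "nat \<Rightarrow> nat \<Rightarrow> real mat" where
  "sel_mat nu mu = mat mu (nu + mu) (\<lambda>(i, j). if j = nu + i then 1 else 0)"

definition in_D :: "real mat \<Rightarrow> real mat \<Rightarrow> real vec \<Rightarrow> real vec \<Rightarrow> real vec \<Rightarrow> bool" where
  "in_D F G h x u \<longleftrightarrow> vec_le (F *\<^sub>v x + G *\<^sub>v u) h"

definition is_interval :: "nat \<Rightarrow> nat \<Rightarrow> (nat \<Rightarrow> real vec) \<Rightarrow> (nat \<Rightarrow> real vec) \<Rightarrow> bool" where
  "is_interval mu T lo up \<longleftrightarrow>
     (\<forall>t<T. lo t \<in> carrier_vec mu \<and> up t \<in> carrier_vec mu \<and>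
            binary_vec (lo t) \<and> binary_vec (up t) \<and> vec_le (lo t) (up t))"

(* feasible set of the dual D(V; xi) (the constraints do not involve xi) *)
definition dual_feasible ::
  "real mat \<Rightarrow> real mat \<Rightarrow> real mat \<Rightarrow> real mat \<Rightarrow> real mat \<Rightarrow> real mat \<Rightarrow> real mat \<Rightarrow> nat \<Rightarrow>
   (nat \<Rightarrow> real vec) \<Rightarrow> (nat \<Rightarrow> real vec) \<Rightarrow> (nat \<Rightarrow> real vec) \<Rightarrow>
   (nat \<Rightarrow> real vec) \<Rightarrow> (nat \<Rightarrow> real vec) \<Rightarrow> (nat \<Rightarrow> real vec) \<Rightarrow> bool" where
  "dual_feasible A B F G V Q R T lam rho mu nlo nup sig \<longleftrightarrow>
     (\<forall>t\<le>T. lam t \<in> carrier_vec (dim_row A) \<and> rho t \<in> carrier_vec (dim_row Q)) \<and>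
     (\<forall>t<T. mu t \<in> carrier_vec (dim_row F) \<and> nlo t \<in> carrier_vec (dim_row V) \<and>
            nup t \<in> carrier_vec (dim_row V) \<and> sig t \<in> carrier_vec (dim_row R)) \<and>
     (\<forall>t<T. transpose_mat Q *\<^sub>v rho t + lam t - transpose_mat A *\<^sub>v lam (Suc t)
             + transpose_mat F *\<^sub>v mu t = 0\<^sub>v (dim_col A)) \<and>
     transpose_mat Q *\<^sub>v rho T + lam T = 0\<^sub>v (dim_col A) \<and>
     (\<forall>t<T. transpose_mat R *\<^sub>v sig t - transpose_mat B *\<^sub>v lam (Suc t)
             + transpose_mat G *\<^sub>v mu t + transpose_mat V *\<^sub>v (nup t - nlo t) = 0\<^sub>v (dim_col B)) \<and>
     (\<forall>t<T. nonneg_vec (mu t) \<and> nonneg_vec (nlo t) \<and> nonneg_vec (nup t))"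

definition sqn :: "real vec \<Rightarrow> real" where
  "sqn v = v \<bullet> v"

definition dual_obj ::
  "real vec \<Rightarrow> nat \<Rightarrow> (nat \<Rightarrow> real vec) \<Rightarrow> (nat \<Rightarrow> real vec) \<Rightarrow> real vec \<Rightarrow>
   (nat \<Rightarrow> real vec) \<Rightarrow> (nat \<Rightarrow> real vec) \<Rightarrow> (nat \<Rightarrow> real vec) \<Rightarrow>
   (nat \<Rightarrow> real vec) \<Rightarrow> (nat \<Rightarrow> real vec) \<Rightarrow> (nat \<Rightarrow> real vec) \<Rightarrow> real" where
  "dual_obj h T lo up xi lam rho mu nlo nup sig =
     - (\<Sum>t\<le>T. sqn ((1/2) \<cdot>\<^sub>v rho t))
     - (\<Sum>t<T. sqn ((1/2) \<cdot>\<^sub>v sig t) + h \<bullet> mu t + up t \<bullet> nup t - lo t \<bullet> nlo t)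
     - xi \<bullet> lam 0"

definition infeas_cert ::
  "real mat \<Rightarrow> real mat \<Rightarrow> real mat \<Rightarrow> real mat \<Rightarrow> real vec \<Rightarrow> real mat \<Rightarrow> real mat \<Rightarrow> real mat \<Rightarrow> nat \<Rightarrow>
   (nat \<Rightarrow> real vec) \<Rightarrow> (nat \<Rightarrow> real vec) \<Rightarrow> real vec \<Rightarrow>
   (nat \<Rightarrow> real vec) \<Rightarrow> (nat \<Rightarrow> real vec) \<Rightarrow> (nat \<Rightarrow> real vec) \<Rightarrow>
   (nat \<Rightarrow> real vec) \<Rightarrow> (nat \<Rightarrow> real vec) \<Rightarrow> (nat \<Rightarrow> real vec) \<Rightarrow> bool" where
  "infeas_cert A B F G h V Q R T lo up xi lam rho mu nlo nup sig \<longleftrightarrow>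
     dual_feasible A B F G V Q R T lam rho mu nlo nup sig \<and>
     (\<forall>t\<le>T. rho t = 0\<^sub>v (dim_row Q)) \<and>
     (\<forall>t<T. sig t = 0\<^sub>v (dim_row R)) \<and>
     dual_obj h T lo up xi lam rho mu nlo nup sig > 0"

end

theory Submission
  imports Defs
begin

text \<open>Shifting a certificate by one step preserves dual feasibility: the constraints are
time-invariant, and the terminal constraint of the old horizon becomes the last stage constraint
of the new one. Testing the stage-0 dual constraints against the applied pair \<open>(x0, u0)\<close> shows
that the dual objective changes by exactly \<open>\<pi>3 - \<lambda>1' e0\<close>, where \<open>\<pi>3 \<ge> 0\<close> is the
complementarity gap between the primal slacks of \<open>(x0, u0)\<close> and the stage-0 multipliers.
So the new objective stays positive as long as \<open>\<lambda>1' e0 < \<theta>0 + \<pi>3\<close>, which holds for \<open>e0 = 0\<close>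
because \<open>\<theta>0 > 0\<close>.\<close>

lemma mult_mat_vec_zero_vec [simp]:
  "A \<in> carrier_mat m n \<Longrightarrow> A *\<^sub>v 0\<^sub>v n = (0\<^sub>v m :: 'a :: comm_semiring_0 vec)"
  by (rule eq_vecI) (auto simp: scalar_prod_def)

lemma scalar_prod_diff_nonneg:
  assumes "vec_le a b" and "nonneg_vec c" and "dim_vec c = dim_vec a"
  shows "0 \<le> (b - a) \<bullet> c"
  using assms unfolding vec_le_def nonneg_vec_def scalar_prod_def
  by (auto intro!: sum_nonneg)

lemma state_equation_scalar_prod:
  fixes A F Q :: "'a :: comm_ring mat"
  assumes A: "A \<in> carrier_mat m n" and F: "F \<in> carrier_mat k n" and Q: "Q \<in> carrier_mat q n"
    and x: "x \<in> carrier_vec n" and lam: "lam \<in> carrier_vec n" and lam': "lam' \<in> carrier_vec m"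
    and mu: "mu \<in> carrier_vec k" and rho: "rho \<in> carrier_vec q"
    and eq: "transpose_mat Q *\<^sub>v rho + lam - transpose_mat A *\<^sub>v lam' + transpose_mat F *\<^sub>v mu
             = 0\<^sub>v n"
  shows "x \<bullet> lam = lam' \<bullet> (A *\<^sub>v x) - mu \<bullet> (F *\<^sub>v x) - rho \<bullet> (Q *\<^sub>v x)"
proof -
  have c: "transpose_mat Q *\<^sub>v rho \<in> carrier_vec n" "transpose_mat A *\<^sub>v lam' \<in> carrier_vec n"
    "transpose_mat F *\<^sub>v mu \<in> carrier_vec n"
    using assms by simp_all
  have "(transpose_mat Q *\<^sub>v rho + lam - transpose_mat A *\<^sub>v lam' + transpose_mat F *\<^sub>v mu) \<bullet> x = 0"
    using eq x by simp
  then have "(transpose_mat Q *\<^sub>v rho) \<bullet> x + lam \<bullet> x - (transpose_mat A *\<^sub>v lam') \<bullet> x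
      + (transpose_mat F *\<^sub>v mu) \<bullet> x = 0"
    using c x lam
    by (simp add: add_scalar_prod_distrib[of _ n] minus_scalar_prod_distrib[of _ n])
  then show ?thesis
    using transpose_vec_mult_scalar[OF A x lam'] transpose_vec_mult_scalar[OF F x mu]
      transpose_vec_mult_scalar[OF Q x rho] comm_scalar_prod[OF x lam] 
    by (simp add: algebra_simps)
qed

lemma input_equation_scalar_prod:
  fixes B G V R :: "'a :: comm_ring mat"
  assumes B: "B \<in> carrier_mat m n" and G: "G \<in> carrier_mat k n" and V: "V \<in> carrier_mat p n"
    and R: "R \<in> carrier_mat r n"
    and u: "u \<in> carrier_vec n" and lam': "lam' \<in> carrier_vec m" and mu: "mu \<in> carrier_vec k"
    and nlo: "nlo \<in> carrier_vec p" and nup: "nup \<in> carrier_vec p" and sig: "sig \<in> carrier_vec r"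
    and eq: "transpose_mat R *\<^sub>v sig - transpose_mat B *\<^sub>v lam' + transpose_mat G *\<^sub>v mu
             + transpose_mat V *\<^sub>v (nup - nlo) = 0\<^sub>v n"
  shows "lam' \<bullet> (B *\<^sub>v u) = sig \<bullet> (R *\<^sub>v u) + mu \<bullet> (G *\<^sub>v u) + (nup - nlo) \<bullet> (V *\<^sub>v u)"
proof -
  have nu: "nup - nlo \<in> carrier_vec p" using nlo nup by simp
  have c: "transpose_mat R *\<^sub>v sig \<in> carrier_vec n" "transpose_mat B *\<^sub>v lam' \<in> carrier_vec n"
    "transpose_mat G *\<^sub>v mu \<in> carrier_vec n" "transpose_mat V *\<^sub>v (nup - nlo) \<in> carrier_vec n"
    using assms nu by simp_all
  have "(transpose_mat R *\<^sub>v sig - transpose_mat B *\<^sub>v lam' + transpose_mat G *\<^sub>v mu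
             + transpose_mat V *\<^sub>v (nup - nlo)) \<bullet> u = 0"
    using eq u by simp
  then have "(transpose_mat R *\<^sub>v sig) \<bullet> u - (transpose_mat B *\<^sub>v lam') \<bullet> u
      + (transpose_mat G *\<^sub>v mu) \<bullet> u + (transpose_mat V *\<^sub>v (nup - nlo)) \<bullet> u = 0"
    using c u
    by (simp add: add_scalar_prod_distrib[of _ n] minus_scalar_prod_distrib[of _ n])
  then show ?thesis
    using transpose_vec_mult_scalar[OF B u lam'] transpose_vec_mult_scalar[OF G u mu]
      transpose_vec_mult_scalar[OF R u sig] transpose_vec_mult_scalar[OF V u nu] 
    by (simp add: algebra_simps)
qed


definition shift_seq :: "nat \<Rightarrow> 'a \<Rightarrow> (nat \<Rightarrow> 'a) \<Rightarrow> nat \<Rightarrow> 'a" where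
  "shift_seq n z f = (\<lambda>t. if t < n then f (Suc t) else z)"

lemma sum_lessThan_Suc_drop_first:
  fixes f g :: "nat \<Rightarrow> 'a :: ab_group_add"
  assumes "\<And>t. t < n \<Longrightarrow> f t = g (Suc t)" and "f n = 0"
  shows "(\<Sum>t<Suc n. f t) = (\<Sum>t<Suc n. g t) - g 0"
proof -
  have "(\<Sum>t<Suc n. f t) = (\<Sum>t<n. g (Suc t))"
    using assms by simp
  also have "\<dots> = (\<Sum>t<Suc n. g t) - g 0"
    by (simp only: sum.lessThan_Suc_shift) simp
  finally show ?thesis .
qed

lemma dual_obj_shift_seq:
  "dual_obj h (Suc T) (shift_seq T lo' lo) (shift_seq T up' up) xi'
     (shift_seq (Suc T) (0\<^sub>v nx) lam) (shift_seq (Suc T) (0\<^sub>v nq) rho)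
     (shift_seq T (0\<^sub>v nc) mu) (shift_seq T (0\<^sub>v nv) nlo) (shift_seq T (0\<^sub>v nv) nup)
     (shift_seq T (0\<^sub>v nr) sig)
   = dual_obj h (Suc T) lo up xi lam rho mu nlo nup sig
     + sqn ((1/2) \<cdot>\<^sub>v rho 0) + sqn ((1/2) \<cdot>\<^sub>v sig 0)
     + h \<bullet> mu 0 + up 0 \<bullet> nup 0 - lo 0 \<bullet> nlo 0 + xi \<bullet> lam 0 - xi' \<bullet> lam 1"
proof -
  have zero: "v \<bullet> 0\<^sub>v n = 0" "sqn ((1/2) \<cdot>\<^sub>v 0\<^sub>v n) = 0" for v :: "real vec" and n
    by (simp_all add: scalar_prod_def sqn_def)
  have "(\<Sum>t<Suc (Suc T). sqn ((1/2) \<cdot>\<^sub>v shift_seq (Suc T) (0\<^sub>v nq) rho t))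
      = (\<Sum>t<Suc (Suc T). sqn ((1/2) \<cdot>\<^sub>v rho t)) - sqn ((1/2) \<cdot>\<^sub>v rho 0)"
    by (rule sum_lessThan_Suc_drop_first) (simp_all add: shift_seq_def zero)
  moreover have "(\<Sum>t<Suc T. sqn ((1/2) \<cdot>\<^sub>v shift_seq T (0\<^sub>v nr) sig t)
        + h \<bullet> shift_seq T (0\<^sub>v nc) mu t + shift_seq T up' up t \<bullet> shift_seq T (0\<^sub>v nv) nup t
        - shift_seq T lo' lo t \<bullet> shift_seq T (0\<^sub>v nv) nlo t)
      = (\<Sum>t<Suc T. sqn ((1/2) \<cdot>\<^sub>v sig t) + h \<bullet> mu t + up t \<bullet> nup t - lo t \<bullet> nlo t)
        - (sqn ((1/2) \<cdot>\<^sub>v sig 0) + h \<bullet> mu 0 + up 0 \<bullet> nup 0 - lo 0 \<bullet> nlo 0)"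
    by (rule sum_lessThan_Suc_drop_first) (simp_all add: shift_seq_def zero)
  ultimately show ?thesis
    unfolding dual_obj_def lessThan_Suc_atMost[symmetric] by (simp add: shift_seq_def)
qed

lemma dual_feasible_shift_seq:
  fixes A B F G V Q R :: "real mat"
  assumes A: "A \<in> carrier_mat nx nx" and B: "B \<in> carrier_mat nx nw"
    and F: "F \<in> carrier_mat nc nx" and G: "G \<in> carrier_mat nc nw"
    and V: "V \<in> carrier_mat nv nw" and Q: "Q \<in> carrier_mat nq nx" and R: "R \<in> carrier_mat nr nw"
    and feas: "dual_feasible A B F G V Q R (Suc T) lam rho mu nlo nup sig"
  shows "dual_feasible A B F G V Q R (Suc T)
           (shift_seq (Suc T) (0\<^sub>v nx) lam) (shift_seq (Suc T) (0\<^sub>v nq) rho)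
           (shift_seq T (0\<^sub>v nc) mu) (shift_seq T (0\<^sub>v nv) nlo) (shift_seq T (0\<^sub>v nv) nup)
           (shift_seq T (0\<^sub>v nr) sig)"
proof -
  have dims: "dim_row A = nx" "dim_col A = nx" "dim_col B = nw" "dim_row F = nc"
    "dim_row V = nv" "dim_row Q = nq" "dim_row R = nr"
    using assms by auto
  note f = feas[unfolded dual_feasible_def dims]
  have last_state: "transpose_mat Q *\<^sub>v rho (Suc T) + lam (Suc T) - transpose_mat A *\<^sub>v 0\<^sub>v nx
      + transpose_mat F *\<^sub>v 0\<^sub>v nc = 0\<^sub>v nx"
    using f A F by simp
  have last_input: "transpose_mat R *\<^sub>v 0\<^sub>v nr - transpose_mat B *\<^sub>v 0\<^sub>v nx
      + transpose_mat G *\<^sub>v 0\<^sub>v nc + transpose_mat V *\<^sub>v (0\<^sub>v nv - 0\<^sub>v nv) = 0\<^sub>v nw"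
    using R B G V by simp
  show ?thesis
    unfolding dual_feasible_def dims
  proof (intro conjI allI impI)
    fix t assume "t < Suc T"
    then consider "t < T" | "t = T" by linarith
    then show "transpose_mat Q *\<^sub>v shift_seq (Suc T) (0\<^sub>v nq) rho t + shift_seq (Suc T) (0\<^sub>v nx) lam t
        - transpose_mat A *\<^sub>v shift_seq (Suc T) (0\<^sub>v nx) lam (Suc t)
        + transpose_mat F *\<^sub>v shift_seq T (0\<^sub>v nc) mu t = 0\<^sub>v nx"
      by cases (use f last_state in \<open>simp_all add: shift_seq_def\<close>)
  next
    fix t assume "t < Suc T"
    then consider "t < T" | "t = T" by linarith
    then show "transpose_mat R *\<^sub>v shift_seq T (0\<^sub>v nr) sig t
        - transpose_mat B *\<^sub>v shift_seq (Suc T) (0\<^sub>v nx) lam (Suc t)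
        + transpose_mat G *\<^sub>v shift_seq T (0\<^sub>v nc) mu t
        + transpose_mat V *\<^sub>v (shift_seq T (0\<^sub>v nv) nup t - shift_seq T (0\<^sub>v nv) nlo t) = 0\<^sub>v nw"
      by cases (use f last_input in \<open>simp_all add: shift_seq_def\<close>)
  qed (use f Q in \<open>auto simp: shift_seq_def nonneg_vec_def\<close>)
qed


lemma dual_obj_shift_seq_certificate:
  fixes A B F G V Q R :: "real mat"
  assumes A: "A \<in> carrier_mat nx nx" and B: "B \<in> carrier_mat nx nw"
    and F: "F \<in> carrier_mat nc nx" and G: "G \<in> carrier_mat nc nw"
    and V: "V \<in> carrier_mat nv nw" and Q: "Q \<in> carrier_mat nq nx" and R: "R \<in> carrier_mat nr nw"
    and h: "h \<in> carrier_vec nc"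
    and feas: "dual_feasible A B F G V Q R (Suc T) lam rho mu nlo nup sig"
    and rho0: "rho 0 = 0\<^sub>v nq" and sig0: "sig 0 = 0\<^sub>v nr"
    and x: "x \<in> carrier_vec nx" and u: "u \<in> carrier_vec nw" and e: "e \<in> carrier_vec nx"
    and lo0: "lo 0 \<in> carrier_vec nv" and up0: "up 0 \<in> carrier_vec nv"
  shows "dual_obj h (Suc T) (shift_seq T lo' lo) (shift_seq T up' up) (A *\<^sub>v x + B *\<^sub>v u + e)
           (shift_seq (Suc T) (0\<^sub>v nx) lam) (shift_seq (Suc T) (0\<^sub>v nq) rho)
           (shift_seq T (0\<^sub>v nc) mu) (shift_seq T (0\<^sub>v nv) nlo) (shift_seq T (0\<^sub>v nv) nup)
           (shift_seq T (0\<^sub>v nr) sig)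
         = dual_obj h (Suc T) lo up x lam rho mu nlo nup sig
           + ((h - F *\<^sub>v x - G *\<^sub>v u) \<bullet> mu 0 + (V *\<^sub>v u - lo 0) \<bullet> nlo 0
              + (up 0 - V *\<^sub>v u) \<bullet> nup 0)
           - lam 1 \<bullet> e"
proof -
  have dims: "dim_row A = nx" "dim_col A = nx" "dim_col B = nw" "dim_row F = nc"
    "dim_row V = nv" "dim_row Q = nq" "dim_row R = nr"
    using assms by auto
  note f = feas[unfolded dual_feasible_def dims]
  have lam: "lam 0 \<in> carrier_vec nx" "lam 1 \<in> carrier_vec nx"
    and mu: "mu 0 \<in> carrier_vec nc" and nlo: "nlo 0 \<in> carrier_vec nv"
    and nup: "nup 0 \<in> carrier_vec nv"
    using f by auto
  have Ax: "A *\<^sub>v x \<in> carrier_vec nx" and Bu: "B *\<^sub>v u \<in> carrier_vec nx"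
    and Fx: "F *\<^sub>v x \<in> carrier_vec nc" and Gu: "G *\<^sub>v u \<in> carrier_vec nc"
    and Vu: "V *\<^sub>v u \<in> carrier_vec nv"
    using assms by simp_all
  have "x \<bullet> lam 0 = lam 1 \<bullet> (A *\<^sub>v x) - mu 0 \<bullet> (F *\<^sub>v x) - rho 0 \<bullet> (Q *\<^sub>v x)"
    by (rule state_equation_scalar_prod[OF A F Q x lam mu]) (use f rho0 in \<open>auto simp: One_nat_def\<close>)
  then have state: "x \<bullet> lam 0 = lam 1 \<bullet> (A *\<^sub>v x) - mu 0 \<bullet> (F *\<^sub>v x)"
    using Q x rho0 by simp
  have "lam 1 \<bullet> (B *\<^sub>v u) = sig 0 \<bullet> (R *\<^sub>v u) + mu 0 \<bullet> (G *\<^sub>v u) + (nup 0 - nlo 0) \<bullet> (V *\<^sub>v u)"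
    by (rule input_equation_scalar_prod[OF B G V R u lam(2) mu nlo nup])
      (use f sig0 in \<open>auto simp: One_nat_def\<close>)
  then have input: "lam 1 \<bullet> (B *\<^sub>v u) = mu 0 \<bullet> (G *\<^sub>v u) + nup 0 \<bullet> (V *\<^sub>v u) - nlo 0 \<bullet> (V *\<^sub>v u)"
    using R u sig0 minus_scalar_prod_distrib[OF nup nlo Vu] by simp
  have next_state: "(A *\<^sub>v x + B *\<^sub>v u + e) \<bullet> lam 1
      = lam 1 \<bullet> (A *\<^sub>v x) + lam 1 \<bullet> (B *\<^sub>v u) + lam 1 \<bullet> e"
    using Ax Bu e lam comm_scalar_prod[OF Ax lam(2)] comm_scalar_prod[OF Bu lam(2)]
      comm_scalar_prod[OF e lam(2)]
    by (simp add: add_scalar_prod_distrib[of _ nx])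
  have slack: "(h - F *\<^sub>v x - G *\<^sub>v u) \<bullet> mu 0 + (V *\<^sub>v u - lo 0) \<bullet> nlo 0
      + (up 0 - V *\<^sub>v u) \<bullet> nup 0
      = h \<bullet> mu 0 - mu 0 \<bullet> (F *\<^sub>v x) - mu 0 \<bullet> (G *\<^sub>v u) + nlo 0 \<bullet> (V *\<^sub>v u) - lo 0 \<bullet> nlo 0
        + up 0 \<bullet> nup 0 - nup 0 \<bullet> (V *\<^sub>v u)"
    using h Fx Gu Vu mu nlo nup lo0 up0 comm_scalar_prod[OF Fx mu] comm_scalar_prod[OF Gu mu]
      comm_scalar_prod[OF Vu nlo] comm_scalar_prod[OF Vu nup]
    by (simp add: minus_scalar_prod_distrib[of _ nc] minus_scalar_prod_distrib[of _ nv])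
  have "sqn ((1/2) \<cdot>\<^sub>v rho 0) = 0" "sqn ((1/2) \<cdot>\<^sub>v sig 0) = 0"
    by (simp_all add: rho0 sig0 sqn_def scalar_prod_def)
  then show ?thesis
    using dual_obj_shift_seq[of h T lo' lo up' up "A *\<^sub>v x + B *\<^sub>v u + e" nx lam nq rho nc mu
        nv nlo nup nr sig x] state input next_state slack
    by simp
qed

lemma primal_slack_scalar_prod_nonneg:
  fixes F G V :: "real mat"
  assumes F: "F \<in> carrier_mat nc nx" and G: "G \<in> carrier_mat nc nw"
    and V: "V \<in> carrier_mat nv nw"
    and x: "x \<in> carrier_vec nx" and u: "u \<in> carrier_vec nw" and h: "h \<in> carrier_vec nc"
    and xu: "in_D F G h x u" and lo: "vec_le lo (V *\<^sub>v u)" and up: "vec_le (V *\<^sub>v u) up"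
    and mu: "mu \<in> carrier_vec nc" "nonneg_vec mu"
    and nlo: "nlo \<in> carrier_vec nv" "nonneg_vec nlo"
    and nup: "nup \<in> carrier_vec nv" "nonneg_vec nup"
  shows "0 \<le> (h - F *\<^sub>v x - G *\<^sub>v u) \<bullet> mu + (V *\<^sub>v u - lo) \<bullet> nlo + (up - V *\<^sub>v u) \<bullet> nup"
proof -
  have "h - F *\<^sub>v x - G *\<^sub>v u = h - (F *\<^sub>v x + G *\<^sub>v u)"
    using F G x u h by (simp add: minus_add_minus_vec[of _ nc])
  then have "0 \<le> (h - F *\<^sub>v x - G *\<^sub>v u) \<bullet> mu"
    using scalar_prod_diff_nonneg[OF xu[unfolded in_D_def] mu(2)] mu(1) G by simp
  moreover have "0 \<le> (V *\<^sub>v u - lo) \<bullet> nlo"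
    using scalar_prod_diff_nonneg[OF lo nlo(2)] nlo(1) lo V unfolding vec_le_def by simp
  moreover have "0 \<le> (up - V *\<^sub>v u) \<bullet> nup"
    using scalar_prod_diff_nonneg[OF up nup(2)] nup(1) V by simp
  ultimately show ?thesis by linarith
qed


theorem corollary1:
  fixes nx nu mu nc nq nr T :: nat
    and A B F G Q R :: "real mat" and h :: "real vec"
    and x0 u0 e0 :: "real vec"
    and lo0 up0 lam0 rho0 mu0 nlo0 nup0 sig0 :: "nat \<Rightarrow> real vec"
  assumes T: "T \<ge> 1"
    and A: "A \<in> carrier_mat nx nx" and B: "B \<in> carrier_mat nx (nu + mu)"
    and F: "F \<in> carrier_mat nc nx" and G: "G \<in> carrier_mat nc (nu + mu)"
    and h: "h \<in> carrier_vec nc"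
    and D0: "in_D F G h (0\<^sub>v nx) (0\<^sub>v (nu + mu))"
    and Q: "Q \<in> carrier_mat nq nx" and R: "R \<in> carrier_mat nr (nu + mu)"
    and x0: "x0 \<in> carrier_vec nx" and u0: "u0 \<in> carrier_vec (nu + mu)"
    and u0_bin: "\<forall>i<mu. u0 $ (nu + i) = 0 \<or> u0 $ (nu + i) = 1"
    and x0u0: "in_D F G h x0 u0"
    and e0: "e0 \<in> carrier_vec nx"
    and V0: "is_interval mu T lo0 up0"
    and v0: "vec_le (lo0 0) (sel_mat nu mu *\<^sub>v u0) \<and> vec_le (sel_mat nu mu *\<^sub>v u0) (up0 0)"
    and cert0: "infeas_cert A B F G h (sel_mat nu mu) Q R T lo0 up0 x0
                  lam0 rho0 mu0 nlo0 nup0 sig0"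
  shows "let V = sel_mat nu mu;
             v0 = V *\<^sub>v u0;
             x1 = A *\<^sub>v x0 + B *\<^sub>v u0 + e0;
             lo1 = (\<lambda>t. if t < T - 1 then lo0 (Suc t) else 0\<^sub>v mu);
             up1 = (\<lambda>t. if t < T - 1 then up0 (Suc t) else ones_vec mu);
             lam1 = (\<lambda>t. if t < T then lam0 (Suc t) else 0\<^sub>v nx);
             rho1 = (\<lambda>t. if t < T then rho0 (Suc t) else 0\<^sub>v nq);
             mu1 = (\<lambda>t. if t < T - 1 then mu0 (Suc t) else 0\<^sub>v nc);
             nlo1 = (\<lambda>t. if t < T - 1 then nlo0 (Suc t) else 0\<^sub>v mu);
             nup1 = (\<lambda>t. if t < T - 1 then nup0 (Suc t) else 0\<^sub>v mu);
             sig1 = (\<lambda>t. if t < T - 1 then sig0 (Suc t) else 0\<^sub>v nr);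
             theta0 = dual_obj h T lo0 up0 x0 lam0 rho0 mu0 nlo0 nup0 sig0;
             pi3 = (h - F *\<^sub>v x0 - G *\<^sub>v u0) \<bullet> mu0 0 + (v0 - lo0 0) \<bullet> nlo0 0
                   + (up0 0 - v0) \<bullet> nup0 0
         in (lam0 1 \<bullet> e0 < theta0 + pi3 \<longrightarrow>
               infeas_cert A B F G h V Q R T lo1 up1 x1 lam1 rho1 mu1 nlo1 nup1 sig1)
            \<and> (e0 = 0\<^sub>v nx \<longrightarrow> lam0 1 \<bullet> e0 < theta0 + pi3)"
proof -
  obtain T' where T': "T = Suc T'" using T by (cases T) auto
  have V: "sel_mat nu mu \<in> carrier_mat mu (nu + mu)" by (simp add: sel_mat_def)
  from cert0
  have feas: "dual_feasible A B F G (sel_mat nu mu) Q R (Suc T') lam0 rho0 mu0 nlo0 nup0 sig0"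
    and rho0: "\<forall>t\<le>Suc T'. rho0 t = 0\<^sub>v nq" and sig0: "\<forall>t<Suc T'. sig0 t = 0\<^sub>v nr"
    and theta0_pos: "0 < dual_obj h T lo0 up0 x0 lam0 rho0 mu0 nlo0 nup0 sig0"
    using Q R T' by (auto simp: infeas_cert_def)
  have mult0: "mu0 0 \<in> carrier_vec nc" "nonneg_vec (mu0 0)"
    "nlo0 0 \<in> carrier_vec mu" "nonneg_vec (nlo0 0)"
    "nup0 0 \<in> carrier_vec mu" "nonneg_vec (nup0 0)"
    using feas F V unfolding dual_feasible_def by auto
  have lo0: "lo0 0 \<in> carrier_vec mu" and up0: "up0 0 \<in> carrier_vec mu"
    using V0 T unfolding is_interval_def by auto
  note feas1 = dual_feasible_shift_seq[OF A B F G V Q R feas]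
  have "rho0 0 = 0\<^sub>v nq" "sig0 0 = 0\<^sub>v nr" using rho0 sig0 by auto
  note theta1 = dual_obj_shift_seq_certificate[where lo = lo0 and up = up0,
      OF A B F G V Q R h feas this x0 u0 e0 lo0 up0]
  note pi3_nonneg = primal_slack_scalar_prod_nonneg[OF F G V x0 u0 h x0u0 v0[THEN conjunct1]
      v0[THEN conjunct2] mult0]
  show ?thesis
    unfolding Let_def T' diff_Suc_1 infeas_cert_def
    using feas1 theta1 pi3_nonneg rho0 sig0 theta0_pos[unfolded T'] Q R
    by (auto simp: shift_seq_def scalar_prod_def)
qed

end
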